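(* Consider the clique inference problem with nonnegative vertex potentials and the Potts clique potential $C(\mathbf{v})=\lambda\sum_{v\in V}n_v(\mathbf{v})^2$ with $\lambda>0$. Let $\hat{\mathbf{v}}$ be the assignment returned by the $\alpha$-pass algorithm and $\mathbf{v}^*$ an assignment maximizing $F$. Then $F(\hat{\mathbf{v}})\ge\frac{4}{5}F(\mathbf{v}^* )$.
   Context: Clique inference problem: there are $n$ vertices $1,\dots,n$, a finite set $V$ of values ($|V|\ge 2$), real vertex potentials $\psi_{jv}$ ($1\le j\le n$, $v\in V$), and a clique potential $C$ depending only on the counts $n_v(\mathbf{v})=|\{j:v_j=v\}|$. The objective is $F(\mathbf{v})=\sum_{j=1}^n\psi_{jv_j}+C(\mathbf{v})$ over $\mathbf{v}\in V^n$. The $\alpha$-pass algorithm: for each $\alpha\in V$, sort the vertices in decreasing order of $\psi_{j\alpha}-\max_{v\neq\alpha}\psi_{jv}$; for each $k\in\{1,\dots,n\}$ form the assignment giving the first $k$ sorted vertices the value $\alpha$ and every other vertex a value $v\ne\alpha$ maximizing $\psi_{jv}$; output the formed assignment with the largest $F$ over all $\alpha$ and $k$. *)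

theory Defs
  imports Complex_Main
begin

text \<open>Vertices are 1..n; an assignment is a function nat => 'v (only values on 1..n matter).
  psi j v is the vertex potential of vertex j taking value v.\<close>

definition valid_assignment :: "nat \<Rightarrow> 'v set \<Rightarrow> (nat \<Rightarrow> 'v) \<Rightarrow> bool" where
  "valid_assignment n V a \<longleftrightarrow> (\<forall>j\<in>{1..n}. a j \<in> V)"

definition cnt :: "nat \<Rightarrow> (nat \<Rightarrow> 'v) \<Rightarrow> 'v \<Rightarrow> nat" where
  "cnt n a v = card {j \<in> {1..n}. a j = v}"

definition potts :: "real \<Rightarrow> nat \<Rightarrow> 'v set \<Rightarrow> (nat \<Rightarrow> 'v) \<Rightarrow> real" where
  "potts lam n V a = lam * (\<Sum>v\<in>V. (real (cnt n a v))^2)"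

definition objF :: "nat \<Rightarrow> 'v set \<Rightarrow> (nat \<Rightarrow> 'v \<Rightarrow> real) \<Rightarrow> real \<Rightarrow> (nat \<Rightarrow> 'v) \<Rightarrow> real" where
  "objF n V psi lam a = (\<Sum>j\<in>{1..n}. psi j (a j)) + potts lam n V a"

definition best_other :: "'v set \<Rightarrow> (nat \<Rightarrow> 'v \<Rightarrow> real) \<Rightarrow> 'v \<Rightarrow> nat \<Rightarrow> real" where
  "best_other V psi alpha j = Max ((psi j) ` (V - {alpha}))"

definition alpha_key :: "'v set \<Rightarrow> (nat \<Rightarrow> 'v \<Rightarrow> real) \<Rightarrow> 'v \<Rightarrow> nat \<Rightarrow> real" where
  "alpha_key V psi alpha j = psi j alpha - best_other V psi alpha j"

definition valid_order :: "nat \<Rightarrow> 'v set \<Rightarrow> (nat \<Rightarrow> 'v \<Rightarrow> real) \<Rightarrow> 'v \<Rightarrow> nat list \<Rightarrow> bool" where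
  "valid_order n V psi alpha ord \<longleftrightarrow>
     distinct ord \<and> set ord = {1..n} \<and>
     sorted_wrt (\<lambda>i j. alpha_key V psi alpha j \<le> alpha_key V psi alpha i) ord"

definition valid_choice :: "nat \<Rightarrow> 'v set \<Rightarrow> (nat \<Rightarrow> 'v \<Rightarrow> real) \<Rightarrow> ('v \<Rightarrow> nat \<Rightarrow> 'v) \<Rightarrow> bool" where
  "valid_choice n V psi beta \<longleftrightarrow>
     (\<forall>alpha\<in>V. \<forall>j\<in>{1..n}. beta alpha j \<in> V - {alpha} \<and>
        psi j (beta alpha j) = best_other V psi alpha j)"

text \<open>Assignment formed in the alpha-pass for value alpha and prefix length k.\<close>
definition formed :: "('v \<Rightarrow> nat list) \<Rightarrow> ('v \<Rightarrow> nat \<Rightarrow> 'v) \<Rightarrow> 'v \<Rightarrow> nat \<Rightarrow> (nat \<Rightarrow> 'v)" where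
  "formed ord beta alpha k = (\<lambda>j. if j \<in> set (take k (ord alpha)) then alpha else beta alpha j)"

end

theory Submission
  imports Defs
begin

text \<open>Let \<alpha> be the most frequent value of \<open>v\<^sup>*\<close> and \<open>m\<close> its count. The \<alpha>-order sorts the
  vertices by their gain from switching to \<alpha>, so its first \<open>m\<close> vertices are an exchange-optimal
  choice of \<open>m\<close> vertices to receive \<alpha>: that pass assignment has vertex potential at least that of
  \<open>v\<^sup>*\<close> and clique potential at least \<open>\<lambda>m\<^sup>2\<close>. The pass giving \<alpha> to all \<open>n\<close> vertices scores at
  least \<open>\<lambda>n\<^sup>2\<close>, while every count of \<open>v\<^sup>*\<close> is at most \<open>m\<close>, so its clique potential is at most
  \<open>\<lambda>mn\<close>. Now \<open>4m\<^sup>2 + n\<^sup>2 \<ge> 4mn\<close> gives \<open>5 F(vhat) \<ge> 4 F(vstar)\<close>.\<close>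

lemma sum_le_sum_if_dominates:
  fixes d :: "'a \<Rightarrow> real"
  assumes "finite S" "finite T" "card S = card T"
    and dom: "\<And>x y. x \<in> S \<Longrightarrow> y \<in> T - S \<Longrightarrow> d y \<le> d x"
  shows "sum d T \<le> sum d S"
proof -
  have card_diff: "card (T - S) = card (S - T)"
    using assms(1-3) by (metis card_Diff_subset_Int finite_Int Int_commute)
  have "sum d (T - S) \<le> sum d (S - T)"
  proof (cases "S - T = {}")
    case True
    then have "T - S = {}" using card_diff \<open>finite T\<close> by (metis card.empty card_0_eq finite_Diff)
    then show ?thesis using True by simp
  next
    case False
    define c where "c = Min (d ` (S - T))"
    have "c \<in> d ` (S - T)" unfolding c_def using False \<open>finite S\<close> by (intro Min_in) auto
    then have above: "\<And>y. y \<in> T - S \<Longrightarrow> d y \<le> c" using dom by auto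
    have below: "\<And>x. x \<in> S - T \<Longrightarrow> c \<le> d x" unfolding c_def using \<open>finite S\<close> by auto
    have "sum d (T - S) \<le> of_nat (card (T - S)) * c"
      using sum_bounded_above[of "T - S" d c] above by simp
    also have "\<dots> \<le> sum d (S - T)"
      using sum_bounded_below[of "S - T" c d] below card_diff by simp
    finally show ?thesis .
  qed
  then show ?thesis
    using sum.Int_Diff[OF \<open>finite S\<close>, of d T] sum.Int_Diff[OF \<open>finite T\<close>, of d S]
    by (simp add: Int_commute)
qed

lemma sum_le_sum_take_if_sorted:
  fixes d :: "'a \<Rightarrow> real"
  assumes sorted: "sorted_wrt (\<lambda>i j. d j \<le> d i) L" and "distinct L"
    and "T \<subseteq> set L" "card T = m"
  shows "sum d T \<le> sum d (set (take m L))"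
proof (rule sum_le_sum_if_dominates)
  show "finite T" using \<open>T \<subseteq> set L\<close> finite_subset by blast
  have "m \<le> length L"
    using card_mono[OF _ \<open>T \<subseteq> set L\<close>] \<open>card T = m\<close> distinct_card[OF \<open>distinct L\<close>] by simp
  then show "card (set (take m L)) = card T"
    using \<open>distinct L\<close> \<open>card T = m\<close> by (simp add: distinct_card)
next
  fix x y assume x: "x \<in> set (take m L)" and y: "y \<in> T - set (take m L)"
  have "y \<in> set (drop m L)"
    using y \<open>T \<subseteq> set L\<close> set_append[of "take m L" "drop m L"] by auto
  moreover have "sorted_wrt (\<lambda>i j. d j \<le> d i) (take m L @ drop m L)"
    using sorted by simp
  then have "\<forall>u\<in>set (take m L). \<forall>w\<in>set (drop m L). d w \<le> d u"
    unfolding sorted_wrt_append by blast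
  ultimately show "d y \<le> d x" using x by blast
qed simp

lemma sum_if_eq_sum_plus_sum_diff:
  fixes a b :: "'a \<Rightarrow> real"
  assumes "finite I" "T \<subseteq> I"
  shows "(\<Sum>j\<in>I. if j \<in> T then a j else b j) = sum b I + (\<Sum>j\<in>T. a j - b j)"
proof -
  have "(\<Sum>j\<in>I. if j \<in> T then a j else b j) = (\<Sum>j\<in>I. b j + (if j \<in> T then a j - b j else 0))"
    by (rule sum.cong) auto
  also have "\<dots> = sum b I + (\<Sum>j\<in>T. a j - b j)"
    using assms by (simp add: sum.distrib sum.inter_restrict[symmetric] Int_absorb1)
  finally show ?thesis .
qed

lemma sum_cnt_eq:
  assumes "finite V" "valid_assignment n V a"
  shows "(\<Sum>v\<in>V. cnt n a v) = n"
proof -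
  have "(\<Sum>v\<in>V. cnt n a v) = card (\<Union>v\<in>V. {j \<in> {1..n}. a j = v})"
    unfolding cnt_def using assms(1) by (intro card_UN_disjoint[symmetric]) auto
  also have "(\<Union>v\<in>V. {j \<in> {1..n}. a j = v}) = {1..n}"
    using assms(2) unfolding valid_assignment_def by auto
  finally show ?thesis by simp
qed

lemma cnt_le: "cnt n a v \<le> n"
proof -
  have "cnt n a v \<le> card {1..n}" unfolding cnt_def by (intro card_mono) auto
  then show ?thesis by simp
qed

lemma cnt_pos_if_max:
  assumes "valid_assignment n V a" "n \<ge> 1" and max: "\<And>v. v \<in> V \<Longrightarrow> cnt n a v \<le> cnt n a alpha"
  shows "cnt n a alpha \<ge> 1"
proof -
  have "{j \<in> {1..n}. a j = a 1} \<noteq> {}" using \<open>n \<ge> 1\<close> by auto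
  then have "cnt n a (a 1) \<ge> 1" unfolding cnt_def by (simp add: Suc_le_eq card_gt_0_iff)
  moreover have "a 1 \<in> V" using assms(1,2) unfolding valid_assignment_def by simp
  ultimately show ?thesis using max order_trans by blast
qed

lemma potts_ge_cnt_sq:
  assumes "finite V" "alpha \<in> V" "lam \<ge> 0"
  shows "lam * (real (cnt n a alpha))^2 \<le> potts lam n V a"
  unfolding potts_def using assms by (intro mult_left_mono member_le_sum) auto

lemma potts_le_max_cnt:
  assumes "finite V" "valid_assignment n V a" "lam \<ge> 0"
    and max: "\<And>v. v \<in> V \<Longrightarrow> cnt n a v \<le> m"
  shows "potts lam n V a \<le> lam * (real m * real n)"
proof -
  have "(\<Sum>v\<in>V. (real (cnt n a v))^2) \<le> (\<Sum>v\<in>V. real m * real (cnt n a v))"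
    using max by (intro sum_mono) (simp add: power2_eq_square mult_right_mono)
  also have "\<dots> = real m * real n"
    using sum_cnt_eq[OF assms(1,2)] by (simp flip: sum_distrib_left of_nat_sum)
  finally show ?thesis unfolding potts_def using \<open>lam \<ge> 0\<close> by (simp add: mult_left_mono)
qed

lemma sum_psi_le_alpha_or_best_other:
  assumes "finite V" "valid_assignment n V a"
  shows "(\<Sum>j\<in>{1..n}. psi j (a j))
    \<le> (\<Sum>j\<in>{1..n}. if a j = alpha then psi j alpha else best_other V psi alpha j)"
proof (rule sum_mono)
  fix j assume "j \<in> {1..n}"
  then have "a j \<in> V" using assms(2) unfolding valid_assignment_def by blast
  then show "psi j (a j) \<le> (if a j = alpha then psi j alpha else best_other V psi alpha j)"
    unfolding best_other_def using \<open>finite V\<close> by (auto intro: Max_ge)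
qed

lemma formed_alpha_iff:
  assumes "valid_choice n V psi beta" "alpha \<in> V" "j \<in> {1..n}"
  shows "formed ord beta alpha k j = alpha \<longleftrightarrow> j \<in> set (take k (ord alpha))"
  using assms unfolding valid_choice_def formed_def by auto

lemma cnt_formed:
  assumes "valid_order n V psi alpha (ord alpha)" "valid_choice n V psi beta" "alpha \<in> V"
    and "k \<le> n"
  shows "cnt n (formed ord beta alpha k) alpha = k"
proof -
  have "{j \<in> {1..n}. formed ord beta alpha k j = alpha} = set (take k (ord alpha))"
    using formed_alpha_iff[OF assms(2,3)] assms(1) set_take_subset[of k "ord alpha"]
    unfolding valid_order_def by blast
  moreover have "length (ord alpha) = n"
    using assms(1) distinct_card[of "ord alpha"] unfolding valid_order_def by simp
  ultimately show ?thesis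
    unfolding cnt_def using assms(1,4) by (simp add: distinct_card valid_order_def)
qed

lemma sum_psi_formed:
  assumes "valid_choice n V psi beta" "alpha \<in> V"
  shows "(\<Sum>j\<in>{1..n}. psi j (formed ord beta alpha k j))
    = (\<Sum>j\<in>{1..n}. if j \<in> set (take k (ord alpha)) then psi j alpha else best_other V psi alpha j)"
  using assms unfolding valid_choice_def formed_def by (intro sum.cong) auto

lemma sum_psi_le_formed_cnt:
  assumes "finite V" "valid_assignment n V a" "alpha \<in> V"
    and ord: "valid_order n V psi alpha (ord alpha)" and "valid_choice n V psi beta"
  shows "(\<Sum>j\<in>{1..n}. psi j (a j))
    \<le> (\<Sum>j\<in>{1..n}. psi j (formed ord beta alpha (cnt n a alpha) j))"
proof -
  define T where "T = {j \<in> {1..n}. a j = alpha}"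
  define S where "S = set (take (cnt n a alpha) (ord alpha))"
  define b where "b = best_other V psi alpha"
  define gain where "gain j = psi j alpha - b j" for j
  have sorted: "sorted_wrt (\<lambda>i j. gain j \<le> gain i) (ord alpha)"
    using ord unfolding valid_order_def alpha_key_def gain_def b_def by simp
  have "T \<subseteq> set (ord alpha)" "S \<subseteq> {1..n}"
    using ord set_take_subset unfolding T_def S_def valid_order_def by (blast, metis)
  moreover have "card T = cnt n a alpha" unfolding T_def cnt_def ..
  ultimately have exchange: "sum gain T \<le> sum gain S"
    using sum_le_sum_take_if_sorted[OF sorted] ord unfolding S_def valid_order_def by blast
  have "(\<Sum>j\<in>{1..n}. psi j (a j)) \<le> (\<Sum>j\<in>{1..n}. if a j = alpha then psi j alpha else b j)"
    unfolding b_def by (rule sum_psi_le_alpha_or_best_other[OF assms(1,2)])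
  also have "\<dots> = (\<Sum>j\<in>{1..n}. if j \<in> T then psi j alpha else b j)"
    unfolding T_def by (intro sum.cong) auto
  also have "\<dots> = sum b {1..n} + sum gain T"
    unfolding gain_def by (rule sum_if_eq_sum_plus_sum_diff) (auto simp: T_def)
  also have "\<dots> \<le> sum b {1..n} + sum gain S"
    using exchange by simp
  also have "\<dots> = (\<Sum>j\<in>{1..n}. if j \<in> S then psi j alpha else b j)"
    unfolding gain_def using \<open>S \<subseteq> {1..n}\<close> by (simp add: sum_if_eq_sum_plus_sum_diff)
  also have "\<dots> = (\<Sum>j\<in>{1..n}. psi j (formed ord beta alpha (cnt n a alpha) j))"
    unfolding S_def b_def using sum_psi_formed[OF assms(5,3)] by simp
  finally show ?thesis .
qed

lemma objF_formed_cnt_ge: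
  assumes "finite V" "valid_assignment n V a" "alpha \<in> V" "lam \<ge> 0"
    and ord: "valid_order n V psi alpha (ord alpha)" and "valid_choice n V psi beta"
  shows "(\<Sum>j\<in>{1..n}. psi j (a j)) + lam * (real (cnt n a alpha))^2
    \<le> objF n V psi lam (formed ord beta alpha (cnt n a alpha))"
  using sum_psi_le_formed_cnt[of V n a alpha psi ord beta] cnt_formed[of n V psi alpha ord beta]
    assms cnt_le[of n a alpha] potts_ge_cnt_sq[OF assms(1,3,4), of n "formed ord beta alpha (cnt n a alpha)"]
  unfolding objF_def by simp

lemma objF_formed_all_ge:
  assumes "finite V" "alpha \<in> V" "lam \<ge> 0"
    and psi_nonneg: "\<forall>j\<in>{1..n}. \<forall>v\<in>V. psi j v \<ge> 0"
    and ord: "valid_order n V psi alpha (ord alpha)" and beta: "valid_choice n V psi beta"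
  shows "lam * (real n)^2 \<le> objF n V psi lam (formed ord beta alpha n)"
proof -
  have "0 \<le> (\<Sum>j\<in>{1..n}. psi j (formed ord beta alpha n j))"
    using psi_nonneg beta \<open>alpha \<in> V\<close> unfolding valid_choice_def formed_def
    by (intro sum_nonneg) auto
  then show ?thesis
    using cnt_formed[of n V psi alpha ord beta n] ord beta \<open>alpha \<in> V\<close>
      potts_ge_cnt_sq[OF assms(1-3), of n "formed ord beta alpha n"]
    unfolding objF_def by simp
qed

lemma exists_max_cnt:
  assumes "finite V" "V \<noteq> {}"
  obtains alpha where "alpha \<in> V" "\<And>v. v \<in> V \<Longrightarrow> cnt n a v \<le> cnt n a alpha"
proof -
  have "Max (cnt n a ` V) \<in> cnt n a ` V" using assms by simp
  then obtain alpha where "alpha \<in> V" "cnt n a alpha = Max (cnt n a ` V)" by force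
  then show thesis using that assms by simp
qed

lemma four_mul_le_four_sq_add_sq:
  fixes lam x y :: real
  assumes "lam \<ge> 0"
  shows "4 * (lam * (x * y)) \<le> 4 * (lam * x^2) + lam * y^2"
  using mult_left_mono[OF zero_le_power2[of "2 * x - y"] assms]
  by (simp add: algebra_simps power2_eq_square)

theorem theorem3:
  fixes n :: nat and V :: "'v set" and psi :: "nat \<Rightarrow> 'v \<Rightarrow> real" and lam :: real
    and ord :: "'v \<Rightarrow> nat list" and beta :: "'v \<Rightarrow> nat \<Rightarrow> 'v"
    and vhat vstar :: "nat \<Rightarrow> 'v"
  assumes finV: "finite V" and cardV: "card V \<ge> 2"
    and psi_nonneg: "\<forall>j\<in>{1..n}. \<forall>v\<in>V. psi j v \<ge> 0"
    and lam_pos: "lam > 0"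
    and ord_ok: "\<forall>alpha\<in>V. valid_order n V psi alpha (ord alpha)"
    and beta_ok: "valid_choice n V psi beta"
    and vhat_formed: "\<exists>alpha\<in>V. \<exists>k\<in>{1..n}. vhat = formed ord beta alpha k"
    and vhat_best: "\<forall>alpha\<in>V. \<forall>k\<in>{1..n}.
                      objF n V psi lam (formed ord beta alpha k) \<le> objF n V psi lam vhat"
    and vstar_valid: "valid_assignment n V vstar"
    and vstar_opt: "\<forall>a. valid_assignment n V a \<longrightarrow> objF n V psi lam a \<le> objF n V psi lam vstar"
  shows "objF n V psi lam vhat \<ge> 4/5 * objF n V psi lam vstar"
proof -
  have "V \<noteq> {}" using cardV by auto
  then obtain alpha where alpha: "alpha \<in> V" and max: "\<And>v. v \<in> V \<Longrightarrow> cnt n vstar v \<le> cnt n vstar alpha"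
    using exists_max_cnt[OF finV] by blast
  have ord_alpha: "valid_order n V psi alpha (ord alpha)" using ord_ok alpha by blast
  define m where "m = cnt n vstar alpha"
  define P where "P = (\<Sum>j\<in>{1..n}. psi j (vstar j))"
  have "n \<ge> 1" using vhat_formed by auto
  then have "m \<in> {1..n}" using cnt_pos_if_max[OF vstar_valid _ max] cnt_le m_def by simp
  then have "objF n V psi lam (formed ord beta alpha m) \<le> objF n V psi lam vhat"
    using vhat_best alpha by blast
  then have pass_m: "P + lam * (real m)^2 \<le> objF n V psi lam vhat"
    using objF_formed_cnt_ge[of V n vstar alpha lam psi ord beta] finV vstar_valid alpha lam_pos
      ord_alpha beta_ok unfolding m_def P_def by linarith
  have "objF n V psi lam (formed ord beta alpha n) \<le> objF n V psi lam vhat"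
    using vhat_best alpha \<open>n \<ge> 1\<close> by simp
  then have pass_n: "lam * (real n)^2 \<le> objF n V psi lam vhat"
    using objF_formed_all_ge[of V alpha lam n psi ord beta] finV alpha lam_pos psi_nonneg ord_alpha
      beta_ok by linarith
  have opt: "objF n V psi lam vstar \<le> P + lam * (real m * real n)"
    using potts_le_max_cnt[OF finV vstar_valid less_imp_le[OF lam_pos]] max
    unfolding objF_def P_def m_def by simp
  have "0 \<le> P" unfolding P_def using psi_nonneg vstar_valid
    unfolding valid_assignment_def by (intro sum_nonneg) auto
  then show ?thesis
    using pass_m pass_n opt four_mul_le_four_sq_add_sq[of lam "real m" "real n"] lam_pos by linarith
qed

end
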